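(* For all $n\geq1$ and all formulas $\phi,\chi_1,\dots,\chi_n\in\mathcal{L}(\nabla,\bullet)$, $$\vdash_{\mathbf{K}^{\nabla\bullet}}\circ\Big(\bigwedge_{k=1}^n\chi_k\to\phi\Big)\land\bigwedge_{k=1}^n\circ(\neg\phi\to\chi_k)\to\circ\phi.$$
   Context: $\mathcal{L}(\nabla,\bullet)$: $\phi::=p\mid\neg\phi\mid\phi\land\phi\mid\nabla\phi\mid\bullet\phi$ over a nonempty set of propositional variables; $\Delta\phi:=\neg\nabla\phi$, $\circ\phi:=\neg\bullet\phi$. The Hilbert system $\mathbf{K}^{\nabla\bullet}$ has axioms: A0 all instances of propositional tautologies; A1 $\bullet\phi\to\phi$; A2 $\nabla\phi\leftrightarrow\nabla\neg\phi$; A3 $\bullet(\psi\to\phi)\land\phi\to\bullet\phi$; A4 $\nabla(\phi\land\psi)\to\nabla\phi\vee\nabla\psi$; A5 $\bullet(\phi\land\psi)\to\bullet\phi\vee\bullet\psi$; A6 $\nabla\phi\to\bullet\phi\vee\bullet\neg\phi$; A7 $\bullet(\phi\to\psi)\land\bullet(\neg\phi\to\chi)\to\nabla\phi$; and rules: R1 from $\phi$ infer $\Delta\phi$; R2 from $\phi$ infer $\circ\phi$; R3 from $\phi\leftrightarrow\psi$ infer $\Delta\phi\leftrightarrow\Delta\psi$; R4 from $\phi\leftrightarrow\psi$ infer $\circ\phi\leftrightarrow\circ\psi$; MP. *)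

theory Defs
  imports Main
begin

text \<open>Language L(nabla, bullet) over propositional variables of type 'a
  (any HOL type is nonempty, matching a nonempty set of variables).\<close>

datatype 'a form =
    Var 'a
  | Neg "'a form"
  | Conj "'a form" "'a form"
  | Nab "'a form"
  | Bul "'a form"

definition Disj :: "'a form \<Rightarrow> 'a form \<Rightarrow> 'a form" where
  "Disj p q = Neg (Conj (Neg p) (Neg q))"

definition Imp :: "'a form \<Rightarrow> 'a form \<Rightarrow> 'a form" where
  "Imp p q = Neg (Conj p (Neg q))"

definition Iff :: "'a form \<Rightarrow> 'a form \<Rightarrow> 'a form" where
  "Iff p q = Conj (Imp p q) (Imp q p)"

definition Delta :: "'a form \<Rightarrow> 'a form" where
  "Delta p = Neg (Nab p)"

definition Circ :: "'a form \<Rightarrow> 'a form" where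
  "Circ p = Neg (Bul p)"

text \<open>Propositional (classical) valuation: modal subformulas are treated as atoms,
  so a propositional tautology instance is a formula true under every such valuation.\<close>

fun pval :: "('a form \<Rightarrow> bool) \<Rightarrow> 'a form \<Rightarrow> bool" where
  "pval v (Var p) = v (Var p)"
| "pval v (Neg f) = (\<not> pval v f)"
| "pval v (Conj f g) = (pval v f \<and> pval v g)"
| "pval v (Nab f) = v (Nab f)"
| "pval v (Bul f) = v (Bul f)"

definition taut :: "'a form \<Rightarrow> bool" where
  "taut f = (\<forall>v. pval v f)"

inductive deriv :: "'a form \<Rightarrow> bool" where
  A0: "taut f \<Longrightarrow> deriv f"
| A1: "deriv (Imp (Bul p) p)"
| A2: "deriv (Iff (Nab p) (Nab (Neg p)))"
| A3: "deriv (Imp (Conj (Bul (Imp q p)) p) (Bul p))"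
| A4: "deriv (Imp (Nab (Conj p q)) (Disj (Nab p) (Nab q)))"
| A5: "deriv (Imp (Bul (Conj p q)) (Disj (Bul p) (Bul q)))"
| A6: "deriv (Imp (Nab p) (Disj (Bul p) (Bul (Neg p))))"
| A7: "deriv (Imp (Conj (Bul (Imp p q)) (Bul (Imp (Neg p) r))) (Nab p))"
| R1: "deriv p \<Longrightarrow> deriv (Delta p)"
| R2: "deriv p \<Longrightarrow> deriv (Circ p)"
| R3: "deriv (Iff p q) \<Longrightarrow> deriv (Iff (Delta p) (Delta q))"
| R4: "deriv (Iff p q) \<Longrightarrow> deriv (Iff (Circ p) (Circ q))"
| MP: "deriv p \<Longrightarrow> deriv (Imp p q) \<Longrightarrow> deriv q"

fun Conjs :: "'a form list \<Rightarrow> 'a form" where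
  "Conjs [] = undefined"
| "Conjs [f] = f"
| "Conjs (f # fs) = Conj f (Conjs fs)"

end

theory Submission
  imports Defs
begin

text \<open>By A5, \<open>\<circ>\<close> distributes over conjunctions: \<open>\<circ>\<psi>\<^sub>1 \<and> \<dots> \<and> \<circ>\<psi>\<^sub>m \<rightarrow> \<circ>(\<psi>\<^sub>1 \<and> \<dots> \<and> \<psi>\<^sub>m)\<close>.
  Applied to \<open>\<psi>\<^sub>0 = \<And>\<chi>\<^sub>k \<rightarrow> \<phi>\<close> and \<open>\<psi>\<^sub>k = \<not>\<phi> \<rightarrow> \<chi>\<^sub>k\<close>, the conjunction of the \<open>\<psi>\<close>'s is
  propositionally equivalent to \<open>\<phi>\<close>, so rule R4 replaces it by \<open>\<phi>\<close> under \<open>\<circ>\<close>.\<close>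

lemma pval_Imp [simp]: "pval v (Imp a b) = (pval v a \<longrightarrow> pval v b)"
  by (simp add: Imp_def)

lemma pval_Disj [simp]: "pval v (Disj a b) = (pval v a \<or> pval v b)"
  by (simp add: Disj_def)

lemma pval_Iff [simp]: "pval v (Iff a b) = (pval v a \<longleftrightarrow> pval v b)"
  by (auto simp add: Iff_def)

lemma pval_Circ [simp]: "pval v (Circ a) = (\<not> pval v (Bul a))"
  by (simp add: Circ_def)

lemma pval_Conjs: "fs \<noteq> [] \<Longrightarrow> pval v (Conjs fs) = (\<forall>f\<in>set fs. pval v f)"
  by (induction fs rule: Conjs.induct) auto

lemma deriv_tautological_consequence:
  assumes "deriv a" and "deriv b"
    and "\<And>v. pval v a \<Longrightarrow> pval v b \<Longrightarrow> pval v c"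
  shows "deriv c"
proof -
  have "deriv (Imp a (Imp b c))"
    by (rule A0) (simp add: taut_def assms(3))
  with assms(1,2) show "deriv c"
    by (blast intro: MP)
qed

lemma deriv_Circ_cong: "taut (Iff p q) \<Longrightarrow> deriv (Iff (Circ p) (Circ q))"
  by (intro R4 A0)

lemma deriv_Conjs_Circ_imp_Circ_Conjs:
  "fs \<noteq> [] \<Longrightarrow> deriv (Imp (Conjs (map Circ fs)) (Circ (Conjs fs)))"
proof (induction fs rule: Conjs.induct)
  case 1
  then show ?case by simp
next
  case (2 f)
  show ?case by (rule A0) (simp add: taut_def)
next
  case (3 f g gs)
  have IH: "deriv (Imp (Conjs (map Circ (g # gs))) (Circ (Conjs (g # gs))))"
    using "3.IH" by simp
  have "deriv (Imp (Bul (Conj f (Conjs (g # gs)))) (Disj (Bul f) (Bul (Conjs (g # gs)))))"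
    by (rule A5)
  then show ?case
    by (rule deriv_tautological_consequence[OF IH]) auto
qed

theorem proposition9:
  fixes phi :: "'a form" and chis :: "'a form list"
  assumes "length chis \<ge> 1"
  shows "deriv (Imp (Conj (Circ (Imp (Conjs chis) phi))
                          (Conjs (map (\<lambda>chi. Circ (Imp (Neg phi) chi)) chis)))
                    (Circ phi))"
proof -
  have "chis \<noteq> []" using assms by auto
  define psis where "psis = Imp (Conjs chis) phi # map (Imp (Neg phi)) chis"
  have "Conjs (map Circ psis) = Conj (Circ (Imp (Conjs chis) phi))
                          (Conjs (map (\<lambda>chi. Circ (Imp (Neg phi) chi)) chis))"
    using \<open>chis \<noteq> []\<close> by (cases chis) (auto simp: psis_def o_def)
  with deriv_Conjs_Circ_imp_Circ_Conjs[of psis]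
  have distrib: "deriv (Imp (Conj (Circ (Imp (Conjs chis) phi))
                          (Conjs (map (\<lambda>chi. Circ (Imp (Neg phi) chi)) chis))) (Circ (Conjs psis)))"
    by (simp add: psis_def)
  have "taut (Iff (Conjs psis) phi)"
    using \<open>chis \<noteq> []\<close> by (auto simp: taut_def pval_Conjs psis_def)
  then show ?thesis
    by (rule deriv_tautological_consequence[OF distrib deriv_Circ_cong]) auto
qed

end
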